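(* Let $n \ge 1$ and let $x_1 < x_2 < \cdots < x_n$ and $y_1 < y_2 < \cdots < y_n$ be real numbers. Let $A$ be the $n\times n$ matrix $A = [e^{x_i y_j}]_{i,j=1,\ldots,n}$. Then $$\det(A) \ge \frac{1}{c_n} V(\mathbf{x}) V(\mathbf{y})\, e^{(x_1+\cdots+x_n)(y_1+\cdots+y_n)/n}$$ and $$\det(A) \le \frac{1}{c_n} V(\mathbf{x}) V(\mathbf{y})\, e^{x_1y_1+\cdots+x_ny_n}.$$
   Context: For $\mathbf{x}=(x_1,\ldots,x_n)$, $V(\mathbf{x}) := \prod_{1\le i<j\le n}(x_j-x_i)$ denotes the Vandermonde polynomial (equal to $1$ when $n=1$), and similarly $V(\mathbf{y})=\prod_{1\le i<j\le n}(y_j-y_i)$. The constant $c_n$ is $c_n := \prod_{i=1}^{n-1} (i!)$ (with $c_1=1$). *)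

theory Defs
  imports Complex_Main "Jordan_Normal_Form.Determinant"
begin

text \<open>Vandermonde product V(x) = prod over 1 <= i < j <= n of (x_j - x_i); here indices are 0-based: 0 <= i < j < n.\<close>
definition vandermonde :: "nat \<Rightarrow> (nat \<Rightarrow> real) \<Rightarrow> real" where
  "vandermonde n x = (\<Prod>j<n. \<Prod>i<j. (x j - x i))"

definition cn :: "nat \<Rightarrow> real" where
  "cn n = (\<Prod>i=1..<n. fact i)"

definition expmat :: "nat \<Rightarrow> (nat \<Rightarrow> real) \<Rightarrow> (nat \<Rightarrow> real) \<Rightarrow> real mat" where
  "expmat n x y = mat n n (\<lambda>(i, j). exp (x i * y j))"

end

(*
  After factoring exp (x_i y_0) out of row i, the first column of [exp (x_i y_j)] consists of
  ones. Subtracting consecutive rows and writing each difference as an integral over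
  [x_i, x_(i+1)] expresses the determinant of size n + 1 as the integral, over the box of
  points z interlacing x, of (prod_j t_j) det [exp (z_i t_j)] with t_j = y_(j+1) - y_0: a
  determinant of the same kind of size n, to which both bounds apply by induction.
  The same row reduction applied to monomials integrates V(z) over the box to V(x) / n! and
  (z_0 + ... + z_(n-1)) V(z) to n (x_0 + ... + x_n) V(x) / (n+1)!. This evaluates the integral
  of the upper bound, and, for the lower bound, the integral of the tangent line of exp at the
  V-weighted mean of the exponent, which lies below exp.
*)
theory Submission
  imports "HOL-Analysis.Analysis" Defs
begin

section \<open>Determinants of matrices given by entry functions\<close>

lemma det_mat_leibniz:
  fixes f :: "nat \<Rightarrow> nat \<Rightarrow> 'a :: comm_ring_1"
  shows "det (mat n n (\<lambda>(i,j). f i j)) =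
     (\<Sum>p | p permutes {..<n}. signof p * (\<Prod>i<n. f i (p i)))"
proof -
  have "det (mat n n (\<lambda>(i,j). f i j)) =
      (\<Sum>p | p permutes {0..<n}. signof p * (\<Prod>i=0..<n. mat n n (\<lambda>(i,j). f i j) $$ (i, p i)))"
    by (rule det_def') simp
  also have "\<dots> = (\<Sum>p | p permutes {..<n}. signof p * (\<Prod>i<n. f i (p i)))"
    by (intro sum.cong arg_cong2[where f = "(*)"] prod.cong)
       (auto simp: atLeast0LessThan permutes_in_image)
  finally show ?thesis .
qed

lemma det_mat_scale_rows:
  fixes f :: "nat \<Rightarrow> nat \<Rightarrow> 'a :: comm_ring_1"
  shows "det (mat n n (\<lambda>(i,j). r i * f i j)) = (\<Prod>i<n. r i) * det (mat n n (\<lambda>(i,j). f i j))"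
  by (simp add: det_mat_leibniz prod.distrib sum_distrib_left mult_ac)

lemma det_mat_transpose:
  fixes f :: "nat \<Rightarrow> nat \<Rightarrow> 'a :: comm_ring_1"
  shows "det (mat n n (\<lambda>(i,j). f j i)) = det (mat n n (\<lambda>(i,j). f i j))"
proof -
  have "mat n n (\<lambda>(i,j). f j i) = transpose_mat (mat n n (\<lambda>(i,j). f i j))"
    by (rule eq_matI) auto
  then show ?thesis
    by (metis det_transpose mat_carrier)
qed

lemma det_mat_scale_cols:
  fixes f :: "nat \<Rightarrow> nat \<Rightarrow> 'a :: comm_ring_1"
  shows "det (mat n n (\<lambda>(i,j). c j * f i j)) = (\<Prod>j<n. c j) * det (mat n n (\<lambda>(i,j). f i j))"
  using det_mat_scale_rows[of n c "\<lambda>i j. f j i"]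
  by (simp add: det_mat_transpose[of n "\<lambda>i j. c i * f j i"] det_mat_transpose[of n "\<lambda>i j. f j i"])

lemma det_mat_upper_triangular:
  fixes f :: "nat \<Rightarrow> nat \<Rightarrow> 'a :: comm_ring_1"
  assumes "\<And>i j. j < i \<Longrightarrow> i < n \<Longrightarrow> f i j = 0"
  shows "det (mat n n (\<lambda>(i,j). f i j)) = (\<Prod>i<n. f i i)"
proof -
  have "det (mat n n (\<lambda>(i,j). f i j)) = prod_list (diag_mat (mat n n (\<lambda>(i,j). f i j)))"
    by (rule det_upper_triangular) (auto intro!: upper_triangularI simp: assms)
  also have "\<dots> = (\<Prod>i<n. f i i)"
    by (simp add: diag_mat_def prod.distinct_set_conv_list[symmetric] atLeast0LessThan cong: map_cong)
  finally show ?thesis .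
qed

lemma det_mat_Suc_unit_first_row:
  fixes a :: "nat \<Rightarrow> nat \<Rightarrow> 'a :: comm_ring_1"
  assumes "a 0 0 = 1" and "\<And>j. j < n \<Longrightarrow> a 0 (Suc j) = 0"
  shows "det (mat (Suc n) (Suc n) (\<lambda>(i,j). a i j)) = det (mat n n (\<lambda>(i,j). a (Suc i) (Suc j)))"
proof -
  let ?A = "mat (Suc n) (Suc n) (\<lambda>(i,j). a i j)"
  have "det ?A = (\<Sum>j<Suc n. ?A $$ (0, j) * cofactor ?A 0 j)"
    by (rule laplace_expansion_row) auto
  also have "\<dots> = cofactor ?A 0 0"
    using assms by (simp add: sum.lessThan_Suc_shift del: sum.lessThan_Suc)
  also have "\<dots> = det (mat_delete ?A 0 0)"
    by (simp add: cofactor_def)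
  also have "mat_delete ?A 0 0 = mat n n (\<lambda>(i,j). a (Suc i) (Suc j))"
    by (rule eq_matI) (auto simp: mat_delete_def)
  finally show ?thesis .
qed

lemma det_mat_sub_prev_column:
  fixes a :: "nat \<Rightarrow> nat \<Rightarrow> 'a :: comm_ring_1"
  shows "det (mat n n (\<lambda>(i,j). if j = 0 then a i 0 else a i j - c * a i (j - 1))) =
         det (mat n n (\<lambda>(i,j). a i j))"
proof -
  let ?B = "mat n n (\<lambda>(i,j). if j = 0 then a i 0 else a i j - c * a i (j - 1))"
  define A where "A = mat n n (\<lambda>(i,j). a i j)"
  define U :: "'a mat"
    where "U = mat n n (\<lambda>(k,j). (if k = j then 1 else 0) - (if j = Suc k then c else 0))"
  have A: "A \<in> carrier_mat n n" and U: "U \<in> carrier_mat n n"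
    by (simp_all add: A_def U_def)
  have "det U = 1"
    unfolding U_def by (subst det_mat_upper_triangular) auto
  moreover have "A * U = ?B"
  proof (rule eq_matI)
    fix i j assume ij: "i < dim_row ?B" "j < dim_col ?B"
    then have "(A * U) $$ (i, j) =
        (\<Sum>k<n. a i k * ((if k = j then 1 else 0) - (if j = Suc k then c else 0)))"
      by (simp add: A_def U_def scalar_prod_def atLeast0LessThan)
    also have "\<dots> = (\<Sum>k<n. (if k = j then a i k else 0) - (if j = Suc k then c * a i k else 0))"
      by (rule sum.cong) (auto simp: algebra_simps)
    also have "\<dots> = (\<Sum>k<n. if k = j then a i k else 0) - (\<Sum>k<n. if j = Suc k then c * a i k else 0)"
      by (rule sum_subtractf)
    also have "\<dots> = ?B $$ (i, j)"
      using ij by (cases j) (auto simp: sum.delta)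
    finally show "(A * U) $$ (i, j) = ?B $$ (i, j)" .
  qed (auto simp: A_def U_def)
  ultimately show ?thesis
    using det_mult[OF A U] by (simp add: A_def)
qed

lemma det_mat_Suc_row_differences:
  fixes a :: "nat \<Rightarrow> nat \<Rightarrow> 'a :: comm_ring_1"
  assumes "\<And>i. i \<le> n \<Longrightarrow> a i 0 = 1"
  shows "det (mat (Suc n) (Suc n) (\<lambda>(i,j). a i j)) =
         det (mat n n (\<lambda>(i,j). a (Suc i) (Suc j) - a i (Suc j)))"
proof -
  have "det (mat (Suc n) (Suc n) (\<lambda>(i,j). a i j)) = det (mat (Suc n) (Suc n) (\<lambda>(i,j). a j i))"
    by (rule det_mat_transpose[symmetric])
  also have "\<dots> = det (mat (Suc n) (Suc n) (\<lambda>(i,j). if j = 0 then a 0 i else a j i - 1 * a (j - 1) i))"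
    using det_mat_sub_prev_column[of "Suc n" "\<lambda>i j. a j i" 1] by simp
  also have "\<dots> = det (mat n n (\<lambda>(i,j). a (Suc j) (Suc i) - a j (Suc i)))"
    using assms by (subst det_mat_Suc_unit_first_row) auto
  finally show ?thesis
    by (simp add: det_mat_transpose[of _ "\<lambda>i j. a (Suc j) (Suc i) - a j (Suc i)"])
qed

section \<open>Vandermonde determinants\<close>

lemma vandermonde_Suc_first:
  "vandermonde (Suc n) x = (\<Prod>i<n. x (Suc i) - x 0) * vandermonde n (\<lambda>i. x (Suc i))"
  by (simp add: vandermonde_def prod.lessThan_Suc_shift prod.distrib del: prod.lessThan_Suc)

lemma vandermonde_Suc_shifted:
  "vandermonde (Suc n) x = (\<Prod>i<n. x (Suc i) - x 0) * vandermonde n (\<lambda>i. x (Suc i) - x 0)"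
  by (simp only: vandermonde_Suc_first) (simp add: vandermonde_def)

lemma det_vandermonde: "det (mat n n (\<lambda>(i,j). x i ^ j)) = vandermonde n x"
proof (induction n arbitrary: x)
  case 0
  then show ?case
    by (simp add: vandermonde_def det_mat_leibniz)
next
  case (Suc n)
  have "det (mat (Suc n) (Suc n) (\<lambda>(i,j). x i ^ j)) =
      det (mat (Suc n) (Suc n) (\<lambda>(i,j). if j = 0 then x i ^ 0 else x i ^ j - x 0 * x i ^ (j - 1)))"
    by (rule det_mat_sub_prev_column[symmetric])
  also have "\<dots> = det (mat n n (\<lambda>(i,j). x (Suc i) ^ Suc j - x 0 * x (Suc i) ^ j))"
    by (subst det_mat_Suc_unit_first_row) auto
  also have "mat n n (\<lambda>(i,j). x (Suc i) ^ Suc j - x 0 * x (Suc i) ^ j) =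
      mat n n (\<lambda>(i,j). (x (Suc i) - x 0) * x (Suc i) ^ j)"
    by (rule cong_mat[OF refl refl]) (simp add: algebra_simps)
  also have "det \<dots> = vandermonde (Suc n) x"
    by (simp add: det_mat_scale_rows Suc.IH vandermonde_Suc_first)
  finally show ?case .
qed

lemma det_mat_last_column_lincomb:
  fixes a :: "nat \<Rightarrow> nat \<Rightarrow> 'a :: comm_ring_1"
  shows "det (mat (Suc n) (Suc n) (\<lambda>(i,j). if j = n then (\<Sum>k<Suc n. c k * a i k) else a i j)) =
         c n * det (mat (Suc n) (Suc n) (\<lambda>(i,j). a i j))"
proof -
  let ?B = "mat (Suc n) (Suc n) (\<lambda>(i,j). if j = n then (\<Sum>k<Suc n. c k * a i k) else a i j)"
  define A where "A = mat (Suc n) (Suc n) (\<lambda>(i,j). a i j)"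
  define T :: "'a mat"
    where "T = mat (Suc n) (Suc n) (\<lambda>(k,j). if j = n then c k else if k = j then 1 else 0)"
  have A: "A \<in> carrier_mat (Suc n) (Suc n)" and T: "T \<in> carrier_mat (Suc n) (Suc n)"
    by (simp_all add: A_def T_def)
  have "(\<Prod>i<n. if i = n then c i else 1) = 1"
    by (rule prod.neutral) auto
  then have "det T = c n"
    unfolding T_def by (subst det_mat_upper_triangular) auto
  moreover have "A * T = ?B"
  proof (rule eq_matI)
    fix i j assume "i < dim_row ?B" and j: "j < dim_col ?B"
    moreover have "(\<Sum>k<n. a i k * (if k = j then 1 else 0)) = a i j" if "j \<noteq> n"
    proof -
      have "(\<Sum>k<n. a i k * (if k = j then 1 else 0)) = (\<Sum>k<n. if k = j then a i k else 0)"
        by (rule sum.cong) auto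
      then show ?thesis
        using j that by simp
    qed
    ultimately show "(A * T) $$ (i, j) = ?B $$ (i, j)"
      by (simp add: A_def T_def scalar_prod_def atLeast0LessThan mult.commute)
  qed (auto simp: A_def T_def)
  ultimately show ?thesis
    using det_mult[OF A T] by (simp add: A_def)
qed

lemma degree_prod_linear_factors: "degree (\<Prod>k<m. [:- x k :: 'a :: idom, 1:]) = m"
  by (simp add: degree_prod_eq_sum_degree)

lemma lead_coeff_prod_linear_factors: "coeff (\<Prod>k<m. [:- x k :: 'a :: idom, 1:]) m = 1"
  using lead_coeff_prod[of "\<lambda>k. [:- x k, 1:]" "{..<m}"] by (simp add: degree_prod_linear_factors)

lemma coeff_mult_linear_factor_Suc:
  fixes p :: "'a :: comm_ring_1 poly"
  shows "coeff (p * [:a, 1:]) (Suc k) = a * coeff p (Suc k) + coeff p k"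
  by (simp add: mult_pCons_right)

lemma coeff_prod_linear_factors_subleading:
  "coeff (\<Prod>k<Suc n. [:- x k, 1:]) n = - (\<Sum>k<Suc n. x k :: 'a :: idom)"
proof (induction n)
  case 0
  then show ?case by simp
next
  case (Suc n)
  have "coeff (\<Prod>k<Suc (Suc n). [:- x k, 1:]) (Suc n) =
      coeff ((\<Prod>k<Suc n. [:- x k, 1:]) * [:- x (Suc n), 1:]) (Suc n)"
    by (simp only: prod.lessThan_Suc)
  also have "\<dots> = - x (Suc n) + coeff (\<Prod>k<Suc n. [:- x k, 1:]) n"
    by (simp only: coeff_mult_linear_factor_Suc lead_coeff_prod_linear_factors) simp
  finally show ?case
    using Suc.IH by simp
qed

lemma power_eq_lincomb_lower_powers:
  fixes x :: "nat \<Rightarrow> 'a :: idom"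
  assumes "i < m"
  shows "x i ^ m = (\<Sum>k<m. - coeff (\<Prod>k<m. [:- x k, 1:]) k * x i ^ k)"
proof -
  let ?P = "\<Prod>k<m. [:- x k, 1:]"
  have "0 = poly ?P (x i)"
    using assms by (auto simp: poly_prod intro!: bexI[of _ i])
  also have "\<dots> = (\<Sum>k<Suc m. coeff ?P k * x i ^ k)"
    by (simp add: poly_altdef degree_prod_linear_factors lessThan_Suc_atMost del: prod.lessThan_Suc)
  also have "\<dots> = (\<Sum>k<m. coeff ?P k * x i ^ k) + x i ^ m"
    by (simp add: lead_coeff_prod_linear_factors del: prod.lessThan_Suc)
  finally show ?thesis
    by (simp add: sum_negf eq_neg_iff_add_eq_0 add.commute del: prod.lessThan_Suc)
qed

lemma det_vandermonde_last_power_Suc: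
  "det (mat (Suc n) (Suc n) (\<lambda>(i,j). x i ^ (if j = n then Suc n else j))) =
   (\<Sum>i<Suc n. x i) * vandermonde (Suc n) x"
proof -
  define c where "c k = - coeff (\<Prod>k<Suc n. [:- x k, 1:]) k" for k
  have lincomb: "x i ^ Suc n = (\<Sum>k<Suc n. c k * x i ^ k)" if "i < Suc n" for i
    using that unfolding c_def by (rule power_eq_lincomb_lower_powers)
  have "mat (Suc n) (Suc n) (\<lambda>(i,j). x i ^ (if j = n then Suc n else j)) =
      mat (Suc n) (Suc n) (\<lambda>(i,j). if j = n then (\<Sum>k<Suc n. c k * x i ^ k) else x i ^ j)"
    by (rule cong_mat[OF refl refl]) (simp add: lincomb del: power_Suc sum.lessThan_Suc)
  moreover have "c n = (\<Sum>i<Suc n. x i)"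
    unfolding c_def by (simp only: coeff_prod_linear_factors_subleading minus_minus)
  ultimately show ?thesis
    by (simp only: det_mat_last_column_lincomb det_vandermonde)
qed

section \<open>Determinants as integrals over interlacing boxes\<close>

lemma indicator_Pi:
  assumes "finite I"
  shows "indicator (Pi I A) x = (\<Prod>i\<in>I. indicator (A i) (x i) :: 'a :: comm_semiring_1)"
proof (cases "x \<in> Pi I A")
  case False
  then obtain i where "i \<in> I" "x i \<notin> A i"
    by auto
  with assms have "(\<Prod>i\<in>I. indicator (A i) (x i) :: 'a) = 0"
    by (intro prod_zero bexI[of _ i]) auto
  with False show ?thesis
    by simp
qed (simp add: Pi_def)

lemma set_integral_box_det:
  fixes f :: "nat \<Rightarrow> nat \<Rightarrow> real \<Rightarrow> real"
  assumes f: "\<And>i j. i < n \<Longrightarrow> j < n \<Longrightarrow> continuous_on {a i..b i} (f i j)"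
  shows "set_integrable (\<Pi>\<^sub>M i\<in>{..<n}. lborel) (\<Pi> i\<in>{..<n}. {a i..b i})
           (\<lambda>z. det (mat n n (\<lambda>(i,j). f i j (z i))))"
    and "(LINT z:(\<Pi> i\<in>{..<n}. {a i..b i})|(\<Pi>\<^sub>M i\<in>{..<n}. lborel). det (mat n n (\<lambda>(i,j). f i j (z i)))) =
         det (mat n n (\<lambda>(i,j). LINT u:{a i..b i}|lborel. f i j u))"
proof -
  interpret product_sigma_finite "\<lambda>_. lborel :: real measure"
    by (intro product_sigma_finite.intro sigma_finite_lborel)
  define g where "g = (\<lambda>(p :: nat \<Rightarrow> nat) i u. indicator {a i..b i} u * f i (p i) u)"
  have expand: "indicator (\<Pi> i\<in>{..<n}. {a i..b i}) z *\<^sub>R det (mat n n (\<lambda>(i,j). f i j (z i))) =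
      (\<Sum>p | p permutes {..<n}. signof p * (\<Prod>i<n. g p i (z i)))" for z
    by (simp add: indicator_Pi det_mat_leibniz g_def sum_distrib_left prod.distrib mult_ac)
  have g: "integrable lborel (g p i)" if "p permutes {..<n}" "i < n" for p i
  proof -
    have "p i < n"
      using that permutes_in_image by fastforce
    then have "set_integrable lborel {a i..b i} (f i (p i))"
      using f that by (intro borel_integrable_atLeastAtMost') auto
    then show ?thesis
      by (simp add: set_integrable_def g_def)
  qed
  have prod_g: "integrable (\<Pi>\<^sub>M i\<in>{..<n}. lborel) (\<lambda>z. \<Prod>i<n. g p i (z i))" if "p permutes {..<n}" for p
    using g that by (intro product_integrable_prod) auto
  then show "set_integrable (\<Pi>\<^sub>M i\<in>{..<n}. lborel) (\<Pi> i\<in>{..<n}. {a i..b i})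
      (\<lambda>z. det (mat n n (\<lambda>(i,j). f i j (z i))))"
    unfolding set_integrable_def expand by (intro Bochner_Integration.integrable_sum integrable_mult_right) auto
  have "(LINT z:(\<Pi> i\<in>{..<n}. {a i..b i})|(\<Pi>\<^sub>M i\<in>{..<n}. lborel). det (mat n n (\<lambda>(i,j). f i j (z i)))) =
      (\<Sum>p | p permutes {..<n}. signof p * (LINT z|(\<Pi>\<^sub>M i\<in>{..<n}. lborel). (\<Prod>i<n. g p i (z i))))"
    unfolding set_lebesgue_integral_def expand
    using prod_g by (subst Bochner_Integration.integral_sum) (auto intro!: integrable_mult_right)
  also have "\<dots> = (\<Sum>p | p permutes {..<n}. signof p * (\<Prod>i<n. LINT u|lborel. g p i u))"
    using g by (intro sum.cong refl arg_cong2[where f = "(*)"] product_integral_prod) auto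
  also have "\<dots> = det (mat n n (\<lambda>(i,j). LINT u:{a i..b i}|lborel. f i j u))"
    by (simp add: det_mat_leibniz g_def set_lebesgue_integral_def)
  finally show "(LINT z:(\<Pi> i\<in>{..<n}. {a i..b i})|(\<Pi>\<^sub>M i\<in>{..<n}. lborel). det (mat n n (\<lambda>(i,j). f i j (z i)))) =
      det (mat n n (\<lambda>(i,j). LINT u:{a i..b i}|lborel. f i j u))" .
qed

definition interlacing_box :: "nat \<Rightarrow> (nat \<Rightarrow> real) \<Rightarrow> (nat \<Rightarrow> real) set" where
  "interlacing_box n x = (\<Pi> i\<in>{..<n}. {x i..x (Suc i)})"

lemma set_integrable_interlacing_box_det:
  fixes f :: "nat \<Rightarrow> real \<Rightarrow> real"
  assumes "\<And>j. j < n \<Longrightarrow> continuous_on UNIV (f j)"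
  shows "set_integrable (\<Pi>\<^sub>M i\<in>{..<n}. lborel) (interlacing_box n x)
           (\<lambda>z. det (mat n n (\<lambda>(i,j). f j (z i))))"
  unfolding interlacing_box_def
  using assms by (intro set_integral_box_det) (auto intro: continuous_on_subset)

lemma det_mat_Suc_eq_set_integral:
  fixes F f :: "nat \<Rightarrow> real \<Rightarrow> real"
  assumes x: "\<And>i. i < n \<Longrightarrow> x i \<le> x (Suc i)"
    and F0: "\<And>u. F 0 u = 1"
    and F: "\<And>j u. j < n \<Longrightarrow> (F (Suc j) has_real_derivative f j u) (at u)"
    and f: "\<And>j. j < n \<Longrightarrow> continuous_on UNIV (f j)"
  shows "det (mat (Suc n) (Suc n) (\<lambda>(i,j). F j (x i))) =
         (LINT z:interlacing_box n x|(\<Pi>\<^sub>M i\<in>{..<n}. lborel). det (mat n n (\<lambda>(i,j). f j (z i))))"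
proof -
  have "det (mat (Suc n) (Suc n) (\<lambda>(i,j). F j (x i))) =
      det (mat n n (\<lambda>(i,j). F (Suc j) (x (Suc i)) - F (Suc j) (x i)))"
    using det_mat_Suc_row_differences[of n "\<lambda>i j. F j (x i)"] F0 by simp
  also have "mat n n (\<lambda>(i,j). F (Suc j) (x (Suc i)) - F (Suc j) (x i)) =
      mat n n (\<lambda>(i,j). LINT u:{x i..x (Suc i)}|lborel. f j u)"
  proof -
    have "(LINT u:{x i..x (Suc i)}|lborel. f j u) = F (Suc j) (x (Suc i)) - F (Suc j) (x i)"
      if i: "i < n" and j: "j < n" for i j
    proof -
      have "(F (Suc j) has_vector_derivative f j u) (at u within {x i..x (Suc i)})" for u
        using F[OF j, of u] unfolding has_real_derivative_iff_has_vector_derivative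
        by (rule has_vector_derivative_at_within)
      moreover have "continuous_on {x i..x (Suc i)} (f j)"
        using f[OF j] by (rule continuous_on_subset) simp
      ultimately show ?thesis
        unfolding set_lebesgue_integral_def using x[OF i] by (intro integral_FTC_atLeastAtMost)
    qed
    then show ?thesis
      by (intro cong_mat) auto
  qed
  also have "det \<dots> = (LINT z:interlacing_box n x|(\<Pi>\<^sub>M i\<in>{..<n}. lborel). det (mat n n (\<lambda>(i,j). f j (z i))))"
    unfolding interlacing_box_def
    using f by (intro set_integral_box_det(2)[symmetric]) (auto intro: continuous_on_subset)
  finally show ?thesis .
qed

lemma set_integrable_expmat:
  "set_integrable (\<Pi>\<^sub>M i\<in>{..<n}. lborel) (interlacing_box n x) (\<lambda>z. det (expmat n z t))"
  unfolding expmat_def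
  by (rule set_integrable_interlacing_box_det[where f = "\<lambda>j u. exp (u * t j)"]) (intro continuous_intros)

lemma set_integrable_vandermonde:
  "set_integrable (\<Pi>\<^sub>M i\<in>{..<n}. lborel) (interlacing_box n x) (vandermonde n)"
  using set_integrable_interlacing_box_det[of n "\<lambda>j u. u ^ j" x]
  by (simp add: det_vandermonde continuous_intros)

lemma set_integrable_sum_vandermonde:
  assumes "1 \<le> n"
  shows "set_integrable (\<Pi>\<^sub>M i\<in>{..<n}. lborel) (interlacing_box n x)
           (\<lambda>z. (\<Sum>i<n. z i) * vandermonde n z)"
proof -
  obtain m where n: "n = Suc m"
    using assms by (cases n) auto
  show ?thesis
    using set_integrable_interlacing_box_det[of n "\<lambda>j u. u ^ (if j = m then Suc m else j)" x]
    by (simp add: n det_vandermonde_last_power_Suc continuous_intros del: sum.lessThan_Suc)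
qed

lemma det_expmat_Suc_eq_set_integral:
  fixes y :: "nat \<Rightarrow> real"
  assumes "\<And>i. i < n \<Longrightarrow> x i \<le> x (Suc i)"
  defines "t \<equiv> \<lambda>j. y (Suc j) - y 0"
  shows "det (expmat (Suc n) x y) = exp (y 0 * (\<Sum>i<Suc n. x i)) * (\<Prod>j<n. t j) *
           (LINT z:interlacing_box n x|(\<Pi>\<^sub>M i\<in>{..<n}. lborel). det (expmat n z t))"
proof -
  have "expmat (Suc n) x y = mat (Suc n) (Suc n) (\<lambda>(i,j). exp (x i * y 0) * exp (x i * (y j - y 0)))"
    unfolding expmat_def by (rule cong_mat[OF refl refl]) (simp add: mult_exp_exp algebra_simps)
  then have "det (expmat (Suc n) x y) =
      exp (y 0 * (\<Sum>i<Suc n. x i)) * det (mat (Suc n) (Suc n) (\<lambda>(i,j). exp (x i * (y j - y 0))))"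
    by (simp add: det_mat_scale_rows exp_sum sum_distrib_left mult.commute del: sum.lessThan_Suc prod.lessThan_Suc)
  also have "det (mat (Suc n) (Suc n) (\<lambda>(i,j). exp (x i * (y j - y 0)))) =
      (LINT z:interlacing_box n x|(\<Pi>\<^sub>M i\<in>{..<n}. lborel). det (mat n n (\<lambda>(i,j). t j * exp (z i * t j))))"
    using assms(1) unfolding t_def
    by (intro det_mat_Suc_eq_set_integral[where F = "\<lambda>j u. exp (u * (y j - y 0))"])
      (auto intro!: derivative_eq_intros continuous_intros)
  also have "\<dots> = (\<Prod>j<n. t j) * (LINT z:interlacing_box n x|(\<Pi>\<^sub>M i\<in>{..<n}. lborel). det (expmat n z t))"
    by (simp add: det_mat_scale_cols expmat_def)
  finally show ?thesis
    by (simp only: mult.assoc)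
qed

lemma det_mat_powers_eq_set_integral:
  assumes x: "\<And>i. i < n \<Longrightarrow> x i \<le> x (Suc i)"
    and e: "e 0 = 0" "\<And>j. j < n \<Longrightarrow> 0 < e (Suc j)"
  shows "det (mat (Suc n) (Suc n) (\<lambda>(i,j). x i ^ e j)) = (\<Prod>j<n. real (e (Suc j))) *
           (LINT z:interlacing_box n x|(\<Pi>\<^sub>M i\<in>{..<n}. lborel). det (mat n n (\<lambda>(i,j). z i ^ (e (Suc j) - 1))))"
proof -
  define c where "c j = (if j = 0 then 1 else 1 / real (e j))" for j
  have deriv: "((\<lambda>u. c (Suc j) * u ^ e (Suc j)) has_real_derivative u ^ (e (Suc j) - 1)) (at u)"
    if "j < n" for j u
    using DERIV_cmult[OF DERIV_pow[of "e (Suc j)" u], of "c (Suc j)"] e(2)[OF that]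
    by (simp add: c_def)
  have "(\<Prod>j<n. c (Suc j)) * det (mat (Suc n) (Suc n) (\<lambda>(i,j). x i ^ e j)) =
      det (mat (Suc n) (Suc n) (\<lambda>(i,j). c j * x i ^ e j))"
    by (simp add: det_mat_scale_cols prod.lessThan_Suc_shift c_def del: prod.lessThan_Suc)
  also have "\<dots> = (LINT z:interlacing_box n x|(\<Pi>\<^sub>M i\<in>{..<n}. lborel). det (mat n n (\<lambda>(i,j). z i ^ (e (Suc j) - 1))))"
    by (rule det_mat_Suc_eq_set_integral[where n = n and x = x and F = "\<lambda>j u. c j * u ^ e j"
          and f = "\<lambda>j u. u ^ (e (Suc j) - 1)", OF x _ deriv])
      (simp_all add: c_def e(1) continuous_intros)
  finally have scaled: "(\<Prod>j<n. c (Suc j)) * det (mat (Suc n) (Suc n) (\<lambda>(i,j). x i ^ e j)) =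
      (LINT z:interlacing_box n x|(\<Pi>\<^sub>M i\<in>{..<n}. lborel). det (mat n n (\<lambda>(i,j). z i ^ (e (Suc j) - 1))))" .
  have inverse: "(\<Prod>j<n. real (e (Suc j))) * (\<Prod>j<n. c (Suc j)) = 1"
    using e(2) by (subst prod.distrib[symmetric]) (rule prod.neutral, simp add: c_def)
  show ?thesis
    unfolding scaled[symmetric] by (simp only: mult.assoc[symmetric] inverse mult_1)
qed

lemma set_integral_vandermonde:
  assumes "\<And>i. i < n \<Longrightarrow> x i \<le> x (Suc i)"
  shows "(LINT z:interlacing_box n x|(\<Pi>\<^sub>M i\<in>{..<n}. lborel). vandermonde n z) = vandermonde (Suc n) x / fact n"
proof -
  have "vandermonde (Suc n) x =
      fact n * (LINT z:interlacing_box n x|(\<Pi>\<^sub>M i\<in>{..<n}. lborel). vandermonde n z)"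
    using det_mat_powers_eq_set_integral[of n x id] assms
    by (simp add: det_vandermonde fact_prod_Suc atLeast0LessThan)
  then show ?thesis
    by simp
qed

lemma set_integral_sum_vandermonde:
  assumes "1 \<le> n" and "\<And>i. i < n \<Longrightarrow> x i \<le> x (Suc i)"
  shows "(LINT z:interlacing_box n x|(\<Pi>\<^sub>M i\<in>{..<n}. lborel). (\<Sum>i<n. z i) * vandermonde n z) =
         real n * (\<Sum>i<Suc n. x i) * vandermonde (Suc n) x / fact (Suc n)"
proof -
  obtain m where n: "n = Suc m"
    using assms(1) by (cases n) auto
  define e where "e j = (if j = n then Suc n else j)" for j
  have exponents: "mat (Suc m) (Suc m) (\<lambda>(i,j). z i ^ (e (Suc j) - 1)) =
      mat (Suc m) (Suc m) (\<lambda>(i,j). z i ^ (if j = m then Suc m else j))" for z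
    by (rule cong_mat) (auto simp: e_def n)
  define I where "I = (LINT z:interlacing_box n x|(\<Pi>\<^sub>M i\<in>{..<n}. lborel). (\<Sum>i<n. z i) * vandermonde n z)"
  have "(\<Prod>j<m. real (e (Suc j))) = (\<Prod>j<m. real (Suc j))"
    by (rule prod.cong) (auto simp: e_def n)
  then have prod_e: "(\<Prod>j<n. real (e (Suc j))) = fact m * real (Suc n)"
    by (simp add: n e_def fact_prod_Suc atLeast0LessThan)
  have "e 0 = 0" and "\<And>j. 0 < e (Suc j)"
    by (simp_all add: e_def n)
  moreover have "det (mat (Suc n) (Suc n) (\<lambda>(i,j). x i ^ e j)) = (\<Sum>i<Suc n. x i) * vandermonde (Suc n) x"
    unfolding e_def by (rule det_vandermonde_last_power_Suc)
  moreover have "det (mat n n (\<lambda>(i,j). z i ^ (e (Suc j) - 1))) = (\<Sum>i<n. z i) * vandermonde n z" for z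
    using det_vandermonde_last_power_Suc[of m z] by (simp only: exponents n)
  ultimately have "(\<Sum>i<Suc n. x i) * vandermonde (Suc n) x = fact m * real (Suc n) * I"
    using det_mat_powers_eq_set_integral[of n x e] assms(2) by (simp add: I_def prod_e)
  moreover have "fact (Suc n) = real (Suc n) * (real n * fact m)"
    by (simp add: n)
  ultimately have "real n * (\<Sum>i<Suc n. x i) * vandermonde (Suc n) x / fact (Suc n) =
      real n * (fact m * real (Suc n) * I) / (real (Suc n) * (real n * fact m))"
    by (simp only: mult.assoc)
  also have "\<dots> = I"
    by (simp add: n)
  finally show ?thesis
    by (simp add: I_def)
qed

section \<open>The recursive bounds\<close>

lemma mono_on_lessThan_SucI:
  assumes "\<And>i. Suc i < n \<Longrightarrow> x i \<le> x (Suc i)"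
  shows "mono_on {..<n} (x :: nat \<Rightarrow> 'a :: preorder)"
proof (rule mono_onI)
  fix i j assume "i \<in> {..<n}" "j \<in> {..<n}" "i \<le> j"
  then show "x i \<le> x j"
  proof (induction j)
    case (Suc j)
    show ?case
    proof (cases "i = Suc j")
      case False
      with Suc have "x i \<le> x j" and "x j \<le> x (Suc j)"
        using assms by auto
      then show ?thesis
        by (rule order_trans)
    qed simp
  qed simp
qed

lemma vandermonde_nonneg:
  assumes "mono_on {..<n} x"
  shows "0 \<le> vandermonde n x"
  unfolding vandermonde_def
proof (intro prod_nonneg)
  fix i j assume "j \<in> {..<n}" "i \<in> {..<j}"
  then show "0 \<le> x j - x i"
    using mono_onD[OF assms, of i j] by simp
qed

lemma mono_on_interlacing_box:
  assumes "z \<in> interlacing_box n x"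
  shows "mono_on {..<n} z"
proof (rule mono_on_lessThan_SucI)
  fix i assume "Suc i < n"
  then have "z i \<le> x (Suc i)" and "x (Suc i) \<le> z (Suc i)"
    using assms by (auto simp: interlacing_box_def Pi_iff)
  then show "z i \<le> z (Suc i)"
    by (rule order_trans)
qed

lemma cn_pos: "0 < cn n"
  unfolding cn_def by (intro prod_pos) auto

lemma cn_Suc: "cn (Suc n) = cn n * fact n"
  by (cases n) (simp_all add: cn_def prod.atLeastLessThan_Suc)

lemma exp_ge_tangent: "exp c * (1 + u - c) \<le> exp (u :: real)"
proof -
  have "exp c * (1 + (u - c)) \<le> exp c * exp (u - c)"
    using exp_ge_add_one_self[of "u - c"] by (intro mult_left_mono) auto
  then show ?thesis
    by (simp add: exp_diff add_diff_eq)
qed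

lemma shifted_differences_mono_on:
  fixes y :: "nat \<Rightarrow> real"
  assumes "mono_on {..<Suc n} y"
  shows "mono_on {..<n} (\<lambda>j. y (Suc j) - y 0)"
    and "j < n \<Longrightarrow> 0 \<le> y (Suc j) - y 0"
proof -
  show "mono_on {..<n} (\<lambda>j. y (Suc j) - y 0)"
  proof (rule mono_onI)
    fix r s assume "r \<in> {..<n}" "s \<in> {..<n}" "r \<le> s"
    then show "y (Suc r) - y 0 \<le> y (Suc s) - y 0"
      using mono_onD[OF assms, of "Suc r" "Suc s"] by simp
  qed
  show "j < n \<Longrightarrow> 0 \<le> y (Suc j) - y 0"
    using mono_onD[OF assms, of 0 "Suc j"] by simp
qed

lemma det_expmat_Suc_le_set_integral:
  fixes y :: "nat \<Rightarrow> real"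
  assumes x: "mono_on {..<Suc n} x"
    and h: "set_integrable (\<Pi>\<^sub>M i\<in>{..<n}. lborel) (interlacing_box n x) h"
    and le: "\<And>z. z \<in> interlacing_box n x \<Longrightarrow>
               (\<Prod>j<n. y (Suc j) - y 0) * det (expmat n z (\<lambda>j. y (Suc j) - y 0)) \<le> h z"
  shows "det (expmat (Suc n) x y) \<le>
           exp (y 0 * (\<Sum>i<Suc n. x i)) * (LINT z:interlacing_box n x|(\<Pi>\<^sub>M i\<in>{..<n}. lborel). h z)"
proof -
  have "x i \<le> x (Suc i)" if "i < n" for i
    using mono_onD[OF x, of i "Suc i"] that by simp
  then have "det (expmat (Suc n) x y) = exp (y 0 * (\<Sum>i<Suc n. x i)) *
      (LINT z:interlacing_box n x|(\<Pi>\<^sub>M i\<in>{..<n}. lborel).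
         (\<Prod>j<n. y (Suc j) - y 0) * det (expmat n z (\<lambda>j. y (Suc j) - y 0)))"
    by (simp add: det_expmat_Suc_eq_set_integral mult.assoc del: sum.lessThan_Suc)
  also have "\<dots> \<le> exp (y 0 * (\<Sum>i<Suc n. x i)) * (LINT z:interlacing_box n x|(\<Pi>\<^sub>M i\<in>{..<n}. lborel). h z)"
    using h le set_integrable_expmat by (intro mult_left_mono set_integral_mono) auto
  finally show ?thesis .
qed

lemma det_expmat_Suc_ge_set_integral:
  fixes y :: "nat \<Rightarrow> real"
  assumes x: "mono_on {..<Suc n} x"
    and h: "set_integrable (\<Pi>\<^sub>M i\<in>{..<n}. lborel) (interlacing_box n x) h"
    and ge: "\<And>z. z \<in> interlacing_box n x \<Longrightarrow>
               h z \<le> (\<Prod>j<n. y (Suc j) - y 0) * det (expmat n z (\<lambda>j. y (Suc j) - y 0))"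
  shows "exp (y 0 * (\<Sum>i<Suc n. x i)) * (LINT z:interlacing_box n x|(\<Pi>\<^sub>M i\<in>{..<n}. lborel). h z) \<le>
           det (expmat (Suc n) x y)"
proof -
  have "x i \<le> x (Suc i)" if "i < n" for i
    using mono_onD[OF x, of i "Suc i"] that by simp
  moreover have "exp (y 0 * (\<Sum>i<Suc n. x i)) * (LINT z:interlacing_box n x|(\<Pi>\<^sub>M i\<in>{..<n}. lborel). h z) \<le>
      exp (y 0 * (\<Sum>i<Suc n. x i)) * (LINT z:interlacing_box n x|(\<Pi>\<^sub>M i\<in>{..<n}. lborel).
         (\<Prod>j<n. y (Suc j) - y 0) * det (expmat n z (\<lambda>j. y (Suc j) - y 0)))"
    using h ge set_integrable_expmat by (intro mult_left_mono set_integral_mono) auto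
  ultimately show ?thesis
    by (simp add: det_expmat_Suc_eq_set_integral mult.assoc del: sum.lessThan_Suc)
qed

lemma set_integral_vandermonde_affine:
  assumes n: "1 \<le> n" and x: "\<And>i. i < n \<Longrightarrow> x i \<le> x (Suc i)"
  defines "\<mu> \<equiv> real n / real (Suc n) * (\<Sum>i<Suc n. x i)"
  shows "set_integrable (\<Pi>\<^sub>M i\<in>{..<n}. lborel) (interlacing_box n x)
           (\<lambda>z. (1 + a * ((\<Sum>i<n. z i) - \<mu>)) * vandermonde n z)"
    and "(LINT z:interlacing_box n x|(\<Pi>\<^sub>M i\<in>{..<n}. lborel). (1 + a * ((\<Sum>i<n. z i) - \<mu>)) * vandermonde n z) =
           vandermonde (Suc n) x / fact n"
proof -
  have split: "(1 + a * ((\<Sum>i<n. z i) - \<mu>)) * vandermonde n z =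
      (1 - a * \<mu>) * vandermonde n z + a * ((\<Sum>i<n. z i) * vandermonde n z)" for z
    by (simp add: algebra_simps)
  show "set_integrable (\<Pi>\<^sub>M i\<in>{..<n}. lborel) (interlacing_box n x)
      (\<lambda>z. (1 + a * ((\<Sum>i<n. z i) - \<mu>)) * vandermonde n z)"
    unfolding split using set_integrable_vandermonde set_integrable_sum_vandermonde[OF n]
    by (intro set_integral_add set_integrable_mult_right) auto
  have "(LINT z:interlacing_box n x|(\<Pi>\<^sub>M i\<in>{..<n}. lborel). (1 + a * ((\<Sum>i<n. z i) - \<mu>)) * vandermonde n z) =
      (1 - a * \<mu>) * (vandermonde (Suc n) x / fact n) +
      a * (real n * (\<Sum>i<Suc n. x i) * vandermonde (Suc n) x / fact (Suc n))"
    unfolding split using set_integrable_vandermonde set_integrable_sum_vandermonde[OF n]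
    using set_integral_vandermonde[of n x] set_integral_sum_vandermonde[of n x] n x
    by (simp add: set_integral_add del: sum.lessThan_Suc)
  also have "a * (real n * (\<Sum>i<Suc n. x i) * vandermonde (Suc n) x / fact (Suc n)) =
      a * \<mu> * (vandermonde (Suc n) x / fact n)"
    by (simp add: \<mu>_def field_simps del: sum.lessThan_Suc)
  also have "(1 - a * \<mu>) * (vandermonde (Suc n) x / fact n) + a * \<mu> * (vandermonde (Suc n) x / fact n) =
      vandermonde (Suc n) x / fact n"
    by (simp only: distrib_right[symmetric]) simp
  finally show "(LINT z:interlacing_box n x|(\<Pi>\<^sub>M i\<in>{..<n}. lborel). (1 + a * ((\<Sum>i<n. z i) - \<mu>)) * vandermonde n z) =
      vandermonde (Suc n) x / fact n" .
qed

definition expmat_lower_bound :: "nat \<Rightarrow> (nat \<Rightarrow> real) \<Rightarrow> (nat \<Rightarrow> real) \<Rightarrow> real" where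
  "expmat_lower_bound n x y =
     vandermonde n x * vandermonde n y / cn n * exp ((\<Sum>i<n. x i) * (\<Sum>i<n. y i) / real n)"

definition expmat_upper_bound :: "nat \<Rightarrow> (nat \<Rightarrow> real) \<Rightarrow> (nat \<Rightarrow> real) \<Rightarrow> real" where
  "expmat_upper_bound n x y = vandermonde n x * vandermonde n y / cn n * exp (\<Sum>i<n. x i * y i)"

lemma expmat_upper_bound_le:
  assumes z: "mono_on {..<n} z" and t: "mono_on {..<n} t"
    and "\<And>i. i < n \<Longrightarrow> z i \<le> w i" and "\<And>i. i < n \<Longrightarrow> 0 \<le> t i"
  shows "expmat_upper_bound n z t \<le> vandermonde n z * vandermonde n t / cn n * exp (\<Sum>i<n. w i * t i)"
proof -
  have "(\<Sum>i<n. z i * t i) \<le> (\<Sum>i<n. w i * t i)"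
    using assms(3,4) by (intro sum_mono mult_right_mono) auto
  then show ?thesis
    unfolding expmat_upper_bound_def using cn_pos[of n] vandermonde_nonneg[OF z] vandermonde_nonneg[OF t]
    by (intro mult_left_mono) auto
qed

lemma expmat_lower_bound_ge_tangent:
  assumes z: "mono_on {..<n} z" and t: "mono_on {..<n} t"
  defines "a \<equiv> (\<Sum>i<n. t i) / real n"
  shows "vandermonde n z * vandermonde n t / cn n * exp (a * c) * (1 + a * ((\<Sum>i<n. z i) - c)) \<le>
         expmat_lower_bound n z t"
proof -
  have "exp (a * c) * (1 + a * ((\<Sum>i<n. z i) - c)) \<le> exp (a * (\<Sum>i<n. z i))"
    using exp_ge_tangent[of "a * c" "a * (\<Sum>i<n. z i)"] by (simp add: algebra_simps)
  also have "\<dots> = exp ((\<Sum>i<n. z i) * (\<Sum>i<n. t i) / real n)"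
    by (simp add: a_def)
  finally show ?thesis
    unfolding expmat_lower_bound_def mult.assoc[of _ "exp (a * c)"]
    using cn_pos[of n] vandermonde_nonneg[OF z] vandermonde_nonneg[OF t]
    by (intro mult_left_mono) auto
qed

lemma det_expmat_Suc_le_upper_bound:
  assumes x: "mono_on {..<Suc n} x" and y: "mono_on {..<Suc n} y"
    and IH: "\<And>z t. mono_on {..<n} z \<Longrightarrow> mono_on {..<n} t \<Longrightarrow>
               det (expmat n z t) \<le> expmat_upper_bound n z t"
  shows "det (expmat (Suc n) x y) \<le> expmat_upper_bound (Suc n) x y"
proof -
  define t where "t = (\<lambda>j. y (Suc j) - y 0)"
  define C where "C = (\<Prod>j<n. t j) * vandermonde n t / cn n * exp (\<Sum>i<n. x (Suc i) * t i)"
  note t = shifted_differences_mono_on[OF y, folded t_def]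
  have t_nonneg: "0 \<le> t j" if "j < n" for j
    using t(2)[OF that] by (simp add: t_def)
  have "(\<Prod>j<n. t j) * det (expmat n z t) \<le> C * vandermonde n z" if z: "z \<in> interlacing_box n x" for z
  proof -
    have "det (expmat n z t) \<le> expmat_upper_bound n z t"
      by (rule IH[OF mono_on_interlacing_box[OF z] t(1)])
    also have "\<dots> \<le> vandermonde n z * vandermonde n t / cn n * exp (\<Sum>i<n. x (Suc i) * t i)"
      using z t_nonneg by (intro expmat_upper_bound_le[OF mono_on_interlacing_box[OF z] t(1)])
        (auto simp: interlacing_box_def)
    finally have "(\<Prod>j<n. t j) * det (expmat n z t) \<le>
        (\<Prod>j<n. t j) * (vandermonde n z * vandermonde n t / cn n * exp (\<Sum>i<n. x (Suc i) * t i))"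
      using t_nonneg by (intro mult_left_mono prod_nonneg) auto
    then show ?thesis
      by (simp add: C_def mult_ac)
  qed
  then have "det (expmat (Suc n) x y) \<le>
      exp (y 0 * (\<Sum>i<Suc n. x i)) * (LINT z:interlacing_box n x|(\<Pi>\<^sub>M i\<in>{..<n}. lborel). C * vandermonde n z)"
    using set_integrable_vandermonde
    by (intro det_expmat_Suc_le_set_integral[OF x]) (auto simp: t_def)
  also have "\<dots> = exp (y 0 * (\<Sum>i<Suc n. x i)) * (C * (vandermonde (Suc n) x / fact n))"
    using set_integral_vandermonde[of n x] mono_onD[OF x] by simp
  also have "\<dots> = vandermonde (Suc n) x * ((\<Prod>j<n. t j) * vandermonde n t) / (cn n * fact n) *
      (exp (y 0 * (\<Sum>i<Suc n. x i)) * exp (\<Sum>i<n. x (Suc i) * t i))"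
    by (simp add: C_def)
  also have "\<dots> = expmat_upper_bound (Suc n) x y"
  proof -
    have "y 0 * (\<Sum>i<Suc n. x i) + (\<Sum>i<n. x (Suc i) * t i) = (\<Sum>i<Suc n. x i * y i)"
      by (simp add: t_def sum.lessThan_Suc_shift algebra_simps sum_subtractf sum_distrib_left
          del: sum.lessThan_Suc)
    then show ?thesis
      unfolding expmat_upper_bound_def cn_Suc vandermonde_Suc_shifted[of n y, folded t_def]
      by (simp only: exp_add[symmetric])
  qed
  finally show ?thesis .
qed

lemma det_expmat_Suc_ge_lower_bound:
  assumes n: "1 \<le> n" and x: "mono_on {..<Suc n} x" and y: "mono_on {..<Suc n} y"
    and IH: "\<And>z t. mono_on {..<n} z \<Longrightarrow> mono_on {..<n} t \<Longrightarrow>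
               expmat_lower_bound n z t \<le> det (expmat n z t)"
  shows "expmat_lower_bound (Suc n) x y \<le> det (expmat (Suc n) x y)"
proof -
  define t where "t = (\<lambda>j. y (Suc j) - y 0)"
  define a where "a = (\<Sum>j<n. t j) / real n"
  define \<mu> where "\<mu> = real n / real (Suc n) * (\<Sum>i<Suc n. x i)"
  define C where "C = (\<Prod>j<n. t j) * vandermonde n t / cn n * exp (a * \<mu>)"
  note t = shifted_differences_mono_on[OF y, folded t_def]
  have t_nonneg: "0 \<le> t j" if "j < n" for j
    using t(2)[OF that] by (simp add: t_def)
  have x_Suc: "x i \<le> x (Suc i)" if "i < n" for i
    using mono_onD[OF x, of i "Suc i"] that by simp
  \<comment> \<open>\<open>\<mu>\<close> is the mean of \<open>\<Sum>i<n. z i\<close> with respect to the weight \<open>vandermonde n z\<close> on the box,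
    so the tangent line of \<open>exp\<close> at \<open>a * \<mu>\<close> integrates like the constant \<open>exp (a * \<mu>)\<close>.\<close>
  have pointwise: "C * ((1 + a * ((\<Sum>i<n. z i) - \<mu>)) * vandermonde n z) \<le> (\<Prod>j<n. t j) * det (expmat n z t)"
    if z: "z \<in> interlacing_box n x" for z
  proof -
    have "C * ((1 + a * ((\<Sum>i<n. z i) - \<mu>)) * vandermonde n z) = (\<Prod>j<n. t j) *
        (vandermonde n z * vandermonde n t / cn n * exp (a * \<mu>) * (1 + a * ((\<Sum>i<n. z i) - \<mu>)))"
      by (simp add: C_def mult_ac)
    also have "\<dots> \<le> (\<Prod>j<n. t j) * expmat_lower_bound n z t"
      using expmat_lower_bound_ge_tangent[OF mono_on_interlacing_box[OF z] t(1), of \<mu>] t_nonneg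
      by (intro mult_left_mono prod_nonneg) (auto simp: a_def)
    also have "\<dots> \<le> (\<Prod>j<n. t j) * det (expmat n z t)"
      using IH[OF mono_on_interlacing_box[OF z] t(1)] t_nonneg by (intro mult_left_mono prod_nonneg) auto
    finally show ?thesis .
  qed
  have exponent: "y 0 * (\<Sum>i<Suc n. x i) + a * \<mu> = (\<Sum>i<Suc n. x i) * (\<Sum>i<Suc n. y i) / real (Suc n)"
  proof -
    have "a * \<mu> = (\<Sum>i<Suc n. x i) * (\<Sum>j<n. t j) / real (Suc n)"
      using n by (simp add: a_def \<mu>_def)
    moreover have "(\<Sum>i<Suc n. y i) = real (Suc n) * y 0 + (\<Sum>j<n. t j)"
      by (simp add: t_def sum.lessThan_Suc_shift sum_subtractf algebra_simps del: sum.lessThan_Suc)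
    ultimately show ?thesis
      by (simp add: field_simps del: sum.lessThan_Suc)
  qed
  have "expmat_lower_bound (Suc n) x y = exp (y 0 * (\<Sum>i<Suc n. x i)) * (C * (vandermonde (Suc n) x / fact n))"
    unfolding expmat_lower_bound_def C_def cn_Suc vandermonde_Suc_shifted[of n y, folded t_def]
      exponent[symmetric] exp_add
    by (simp add: mult_ac)
  also have "\<dots> = exp (y 0 * (\<Sum>i<Suc n. x i)) * (LINT z:interlacing_box n x|(\<Pi>\<^sub>M i\<in>{..<n}. lborel).
      C * ((1 + a * ((\<Sum>i<n. z i) - \<mu>)) * vandermonde n z))"
    using set_integral_vandermonde_affine(2)[of n x a] n x_Suc by (simp add: \<mu>_def)
  also have "\<dots> \<le> det (expmat (Suc n) x y)"
    using pointwise set_integral_vandermonde_affine(1)[of n x a] n x_Suc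
    by (intro det_expmat_Suc_ge_set_integral[OF x]) (auto simp: t_def \<mu>_def)
  finally show ?thesis .
qed

lemma det_expmat_le_upper_bound:
  assumes "mono_on {..<n} x" and "mono_on {..<n} y"
  shows "det (expmat n x y) \<le> expmat_upper_bound n x y"
  using assms
proof (induction n arbitrary: x y)
  case 0
  then show ?case
    by (simp add: expmat_def expmat_upper_bound_def vandermonde_def cn_def det_mat_leibniz)
next
  case (Suc n)
  then show ?case
    by (intro det_expmat_Suc_le_upper_bound) (auto elim: mono_on_subset)
qed

lemma det_expmat_ge_lower_bound:
  assumes "1 \<le> n" and "mono_on {..<n} x" and "mono_on {..<n} y"
  shows "expmat_lower_bound n x y \<le> det (expmat n x y)"
  using assms
proof (induction n arbitrary: x y rule: nat_induct_at_least)
  case base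
  then show ?case
    by (simp add: expmat_def expmat_lower_bound_def vandermonde_def cn_def det_single)
next
  case (Suc n)
  then show ?case
    by (intro det_expmat_Suc_ge_lower_bound) (auto elim: mono_on_subset)
qed

theorem theorem1:
  fixes n :: nat and x y :: "nat \<Rightarrow> real"
  assumes "n \<ge> 1"
    and "\<And>i j. i < j \<Longrightarrow> j < n \<Longrightarrow> x i < x j"
    and "\<And>i j. i < j \<Longrightarrow> j < n \<Longrightarrow> y i < y j"
  shows "det (expmat n x y) \<ge> vandermonde n x * vandermonde n y / cn n
           * exp ((\<Sum>i<n. x i) * (\<Sum>i<n. y i) / real n)
       \<and> det (expmat n x y) \<le> vandermonde n x * vandermonde n y / cn n
           * exp (\<Sum>i<n. x i * y i)"
proof -
  have mono: "mono_on {..<n} z" if "\<And>i j. i < j \<Longrightarrow> j < n \<Longrightarrow> z i < z j" for z :: "nat \<Rightarrow> real"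
    using that by (force simp: le_less intro!: mono_onI)
  show ?thesis
    using det_expmat_ge_lower_bound[OF assms(1)] det_expmat_le_upper_bound mono[of x, OF assms(2)] mono[of y, OF assms(3)]
    unfolding expmat_lower_bound_def expmat_upper_bound_def by blast
qed

end
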